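(* Let $(F_i)_{i\in\mathbb{N}}$ be functions $F_i\colon\mathbb{N}\to(0,\infty)$, $(X_i(0))_{i\in\mathbb{N}}\subset\mathbb{N}$, and let $T_1,T_2,\dots$ be the explosion times of independent birth processes $\Xi_1,\Xi_2,\dots$, where $\Xi_i$ has rate function $F_i$ and initial value $X_i(0)$. Assume there is an infinite set $B\subset\mathbb{N}$ with $\sum_{k=1}^\infty\sup_{i\in B}1/F_i(k)<\infty$. Then $$\min_{i=1,\dots,A}T_i\to0\quad\text{in distribution as }A\to\infty.$$
   Context: $\mathbb{N}=\{1,2,\dots\}$. $\Xi_i$ has independent sojourn times $\tau_i(k)$, $k\ge X_i(0)$, exponential with rate $F_i(k)$, and explosion time $T_i=\sum_{k\ge X_i(0)}\tau_i(k)\in(0,\infty]$; all $\tau_i(k)$, $i,k$, are independent. *)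

theory Defs
  imports "HOL-Probability.Probability"
begin

text \<open>Explosion time of the birth process with sojourn times tau k (k \<ge> x0):
  T = sum over k \<ge> x0 of tau k, valued in [0,\<infinity>].\<close>
definition explosion_time :: "(nat \<Rightarrow> 'a \<Rightarrow> real) \<Rightarrow> nat \<Rightarrow> 'a \<Rightarrow> ennreal" where
  "explosion_time tau x0 \<omega> = (\<Sum>n. ennreal (tau (x0 + n) \<omega>))"

end

theory Submission
  imports Defs
begin

(* Fix x > 0.  The series of the suprema sup_{i in B} 1/F_i(k) converges, so there is a K such
   that for every i in B the part of T_i after the K-th birth has mean at most x/4, hence is at
   most x/2 with probability at least 1/2 (Markov), and the rates F_i(k), k < K, are bounded
   below uniformly in i, so the fewer than K sojourns before it are all at most x/(2K) with a
   probability bounded below uniformly in i.  Head and tail are independent, so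
   P(T_i <= x) >= p > 0 for all i in B, and by independence of the processes
   P(min_{i <= A} T_i > x) <= (1 - p)^card(B inter [1, A]), which tends to 0. *)

lemma prod_superset_le_prod:
  fixes f :: "'a \<Rightarrow> 'b::linordered_idom"
  assumes "finite B" "A \<subseteq> B" "\<And>b. b \<in> B \<Longrightarrow> 0 \<le> f b \<and> f b \<le> 1"
  shows "prod f B \<le> prod f A"
proof -
  have "prod f B = prod f A * prod f (B - A)"
    using prod.subset_diff[OF assms(2,1)] by (simp add: mult.commute)
  also have "\<dots> \<le> prod f A * 1"
    using assms by (intro mult_left_mono prod_le_1 prod_nonneg) (auto simp: subset_iff)
  finally show ?thesis by simp
qed

lemma ennreal_suminf_tail_tendsto_0:
  fixes g :: "nat \<Rightarrow> ennreal"
  assumes "suminf g \<noteq> \<infinity>"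
  shows "(\<lambda>n. \<Sum>j. g (j + n)) \<longlonglongrightarrow> 0"
proof -
  have g_fin: "g n \<noteq> \<infinity>" for n
    using assms ennreal_suminf_lessD[of g \<infinity> n] by (simp add: less_top)
  define h where "h n = enn2real (g n)" for n
  have g_eq: "g = (\<lambda>n. ennreal (h n))"
    using g_fin by (simp add: h_def fun_eq_iff less_top)
  have "summable h"
    using assms unfolding g_eq by (intro summable_suminf_not_top) (auto simp: h_def)
  then have "(\<lambda>n. ennreal (\<Sum>j. h (j + n))) \<longlonglongrightarrow> ennreal 0"
    by (intro tendsto_ennrealI suminf_exist_split2)
  moreover have "(\<Sum>j. g (j + n)) = ennreal (\<Sum>j. h (j + n))" for n
    unfolding g_eq using summable_ignore_initial_segment[OF \<open>summable h\<close>]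
    by (intro suminf_ennreal2) (auto simp: h_def)
  ultimately show ?thesis by simp
qed

lemma suminf_SUP_tails_uniformly_less:
  fixes g :: "'i \<Rightarrow> nat \<Rightarrow> ennreal"
  assumes "(\<Sum>k. SUP i\<in>I. g i k) < \<infinity>" and "0 < \<epsilon>"
  obtains N where "\<And>i m. i \<in> I \<Longrightarrow> N \<le> m \<Longrightarrow> (\<Sum>n. g i (n + m)) < \<epsilon>"
proof -
  have "eventually (\<lambda>m. (\<Sum>n. SUP i\<in>I. g i (n + m)) < \<epsilon>) sequentially"
    using assms by (intro order_tendstoD(2)[OF ennreal_suminf_tail_tendsto_0]) auto
  then obtain N where N: "\<And>m. N \<le> m \<Longrightarrow> (\<Sum>n. SUP i\<in>I. g i (n + m)) < \<epsilon>"
    unfolding eventually_sequentially by blast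
  have "(\<Sum>n. g i (n + m)) < \<epsilon>" if "i \<in> I" "N \<le> m" for i m
    using that by (intro le_less_trans[OF suminf_le N]) (auto intro: SUP_upper)
  then show ?thesis by (rule that)
qed

lemma summable_SUP_inverse_lower_bound:
  fixes F :: "'i \<Rightarrow> nat \<Rightarrow> real"
  assumes "I \<noteq> {}" and F_pos: "\<And>i k. i \<in> I \<Longrightarrow> 1 \<le> k \<Longrightarrow> 0 < F i k"
    and summable: "(\<Sum>k. SUP i\<in>I. ennreal (1 / F i (Suc k))) < \<infinity>"
  obtains r where "\<And>k. 1 \<le> k \<Longrightarrow> 0 < r k" and "\<And>i k. i \<in> I \<Longrightarrow> 1 \<le> k \<Longrightarrow> r k \<le> F i k"
proof -
  define s where "s k = enn2real (SUP i\<in>I. ennreal (1 / F i k))" for k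
  have inv_le: "1 / F i k \<le> s k" if "i \<in> I" and "1 \<le> k" for i k
  proof -
    have "(SUP i\<in>I. ennreal (1 / F i (Suc (k - 1)))) < \<infinity>"
      using summable by (rule ennreal_suminf_lessD)
    then have "enn2real (ennreal (1 / F i k)) \<le> s k"
      unfolding s_def using that SUP_upper[OF that(1), of "\<lambda>i. ennreal (1 / F i k)"]
      by (auto intro: enn2real_mono)
    then show ?thesis
      using F_pos[OF that] by simp
  qed
  have s_pos: "0 < s k" if "1 \<le> k" for k
  proof -
    obtain i where "i \<in> I"
      using \<open>I \<noteq> {}\<close> by blast
    then show ?thesis
      using inv_le F_pos that by (meson less_le_trans zero_less_divide_1_iff)
  qed
  show ?thesis
  proof
    show "0 < 1 / s k" if "1 \<le> k" for k
      using s_pos[OF that] by simp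
    show "1 / s k \<le> F i k" if "i \<in> I" and "1 \<le> k" for i k
      using inv_le[OF that] F_pos[OF that] s_pos[OF that(2)] by (simp add: divide_le_eq mult.commute)
  qed
qed

lemma filterlim_card_Int_atMost:
  assumes "infinite B"
  shows "filterlim (\<lambda>n. card (B \<inter> {..n})) at_top sequentially"
  unfolding filterlim_at_top
proof
  fix z
  obtain C where C: "C \<subseteq> B" "finite C" "card C = z"
    using infinite_arbitrarily_large[OF assms] by blast
  have "z \<le> card (B \<inter> {..n})" if "Max (insert 0 C) \<le> n" for n
  proof -
    have "C \<subseteq> B \<inter> {..n}"
      using C that by (auto dest: Max_ge[of "insert 0 C"])
    then show ?thesis
      using C by (metis card_mono finite_Int finite_atMost)
  qed
  then show "eventually (\<lambda>n. z \<le> card (B \<inter> {..n})) sequentially"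
    by (rule eventually_sequentiallyI)
qed

lemma (in prob_space) indep_vars_reindex:
  assumes "indep_vars M' X I" and "inj_on f J" and "f ` J \<subseteq> I"
  shows "indep_vars (\<lambda>j. M' (f j)) (\<lambda>j. X (f j)) J"
proof -
  have "indep_vars (\<lambda>j. PiM {f j} M') (\<lambda>j \<omega>. restrict (\<lambda>i. X i \<omega>) {f j}) J"
    using assms by (intro indep_vars_restrict) (auto simp: disjoint_family_on_def inj_on_def)
  then have "indep_vars (\<lambda>j. M' (f j)) (\<lambda>j \<omega>. restrict (\<lambda>i. X i \<omega>) {f j} (f j)) J"
    by (rule indep_vars_compose2[where Y="\<lambda>j h. h (f j)"]) (simp add: measurable_component_singleton)
  then show ?thesis by simp
qed

lemma (in prob_space) prob_indep_vars_all:
  assumes "indep_vars M' X I" and "finite J" and "J \<subseteq> I" and "\<And>i. i \<in> J \<Longrightarrow> A i \<in> sets (M' i)"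
  shows "\<P>(\<omega> in M. \<forall>i\<in>J. X i \<omega> \<in> A i) = (\<Prod>i\<in>J. \<P>(\<omega> in M. X i \<omega> \<in> A i))"
proof (cases "J = {}")
  case True
  then show ?thesis by (simp add: prob_space)
next
  case False
  have "{\<omega> \<in> space M. \<forall>i\<in>J. X i \<omega> \<in> A i} = (\<Inter>i\<in>J. X i -` A i \<inter> space M)"
    using False by auto
  moreover have "{\<omega> \<in> space M. X i \<omega> \<in> A i} = X i -` A i \<inter> space M" for i
    by auto
  ultimately show ?thesis
    using indep_varsD[OF assms(1) False assms(2-4)] by simp
qed

lemma (in prob_space) prob_indep_vars_restrict_conj:
  assumes "indep_vars M' X I" and "J\<^sub>1 \<inter> J\<^sub>2 = {}" and "J\<^sub>1 \<subseteq> I" and "J\<^sub>2 \<subseteq> I"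
    and P\<^sub>1: "Measurable.pred (PiM J\<^sub>1 M') P\<^sub>1" and P\<^sub>2: "Measurable.pred (PiM J\<^sub>2 M') P\<^sub>2"
  shows "\<P>(\<omega> in M. P\<^sub>1 (restrict (\<lambda>i. X i \<omega>) J\<^sub>1) \<and> P\<^sub>2 (restrict (\<lambda>i. X i \<omega>) J\<^sub>2)) =
    \<P>(\<omega> in M. P\<^sub>1 (restrict (\<lambda>i. X i \<omega>) J\<^sub>1)) * \<P>(\<omega> in M. P\<^sub>2 (restrict (\<lambda>i. X i \<omega>) J\<^sub>2))"
proof -
  define R\<^sub>1 where "R\<^sub>1 = (\<lambda>\<omega>. restrict (\<lambda>i. X i \<omega>) J\<^sub>1)"
  define R\<^sub>2 where "R\<^sub>2 = (\<lambda>\<omega>. restrict (\<lambda>i. X i \<omega>) J\<^sub>2)"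
  define S\<^sub>1 where "S\<^sub>1 = {h \<in> space (PiM J\<^sub>1 M'). P\<^sub>1 h}"
  define S\<^sub>2 where "S\<^sub>2 = {h \<in> space (PiM J\<^sub>2 M'). P\<^sub>2 h}"
  have indep: "indep_var (PiM J\<^sub>1 M') R\<^sub>1 (PiM J\<^sub>2 M') R\<^sub>2"
    unfolding R\<^sub>1_def R\<^sub>2_def using assms(1-4) by (rule indep_var_restrict)
  have "S\<^sub>1 \<in> sets (PiM J\<^sub>1 M')" and "S\<^sub>2 \<in> sets (PiM J\<^sub>2 M')"
    unfolding S\<^sub>1_def S\<^sub>2_def using P\<^sub>1 P\<^sub>2 by measurable
  note prob_prod = indep_varD[OF indep this]
  have "R\<^sub>1 \<omega> \<in> space (PiM J\<^sub>1 M')" and "R\<^sub>2 \<omega> \<in> space (PiM J\<^sub>2 M')" if "\<omega> \<in> space M" for \<omega>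
    using measurable_space[OF indep_var_rv1[OF indep] that] measurable_space[OF indep_var_rv2[OF indep] that] .
  then have "{\<omega> \<in> space M. P\<^sub>1 (R\<^sub>1 \<omega>) \<and> P\<^sub>2 (R\<^sub>2 \<omega>)} = (\<lambda>\<omega>. (R\<^sub>1 \<omega>, R\<^sub>2 \<omega>)) -` (S\<^sub>1 \<times> S\<^sub>2) \<inter> space M"
    and "{\<omega> \<in> space M. P\<^sub>1 (R\<^sub>1 \<omega>)} = R\<^sub>1 -` S\<^sub>1 \<inter> space M"
    and "{\<omega> \<in> space M. P\<^sub>2 (R\<^sub>2 \<omega>)} = R\<^sub>2 -` S\<^sub>2 \<inter> space M"
    by (auto simp: S\<^sub>1_def S\<^sub>2_def)
  then show ?thesis
    using prob_prod unfolding R\<^sub>1_def R\<^sub>2_def by simp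
qed

lemma (in prob_space) prob_le_ge_by_Markov:
  fixes f :: "'a \<Rightarrow> ennreal"
  assumes f: "f \<in> borel_measurable M" and "0 < b" and "0 \<le> c"
    and "(\<integral>\<^sup>+\<omega>. f \<omega> \<partial>M) \<le> ennreal (c * b)"
  shows "1 - c \<le> \<P>(\<omega> in M. f \<omega> \<le> ennreal b)"
proof -
  have "{\<omega> \<in> space M. \<not> f \<omega> \<le> ennreal b} \<subseteq> {\<omega> \<in> space M. 1 \<le> ennreal (1 / b) * f \<omega>}"
  proof safe
    fix \<omega> assume "\<not> f \<omega> \<le> ennreal b"
    then have "ennreal (1 / b) * ennreal b \<le> ennreal (1 / b) * f \<omega>"
      by (intro mult_left_mono) auto
    then show "1 \<le> ennreal (1 / b) * f \<omega>"
      using \<open>0 < b\<close> by (simp flip: ennreal_mult)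
  qed
  then have "emeasure M {\<omega> \<in> space M. \<not> f \<omega> \<le> ennreal b} \<le>
      emeasure M {\<omega> \<in> space M. 1 \<le> ennreal (1 / b) * f \<omega>}"
    using f by (intro emeasure_mono) measurable
  also have "\<dots> \<le> ennreal (1 / b) * (\<integral>\<^sup>+\<omega>. f \<omega> * indicator (space M) \<omega> \<partial>M)"
    using f by (intro nn_integral_Markov_inequality) auto
  also have "(\<integral>\<^sup>+\<omega>. f \<omega> * indicator (space M) \<omega> \<partial>M) = (\<integral>\<^sup>+\<omega>. f \<omega> \<partial>M)"
    by (intro nn_integral_cong) simp
  also have "ennreal (1 / b) * (\<integral>\<^sup>+\<omega>. f \<omega> \<partial>M) \<le> ennreal (1 / b) * ennreal (c * b)"
    using assms(4) by (intro mult_left_mono) auto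
  also have "\<dots> = ennreal c"
    using \<open>0 < b\<close> \<open>0 \<le> c\<close> by (subst ennreal_mult[symmetric]) auto
  finally have "\<P>(\<omega> in M. \<not> f \<omega> \<le> ennreal b) \<le> c"
    using \<open>0 \<le> c\<close> by (simp add: emeasure_eq_measure)
  moreover have "{\<omega> \<in> space M. f \<omega> \<le> ennreal b} \<in> events"
    using f by measurable
  ultimately show ?thesis
    by (simp add: prob_neg)
qed

lemma (in prob_space) nn_integral_exponential_distributed:
  assumes "0 < l" and "distributed M lborel X (exponential_density l)"
  shows "(\<integral>\<^sup>+\<omega>. ennreal (X \<omega>) \<partial>M) = ennreal (1 / l)"
  using nn_integral_erlang_ith_moment[of l 0 1] assms
  by (subst distributed_nn_integral[symmetric, OF assms(2)]) (auto simp: ennreal_mult')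

lemma (in prob_space) prob_suminf_exponential_le_ge_half:
  assumes exp: "\<And>n. distributed M lborel (X n) (exponential_density (l n))" and l_pos: "\<And>n. 0 < l n"
    and "0 < b" and mean: "(\<Sum>n. ennreal (1 / l n)) \<le> ennreal (b / 2)"
  shows "1 / 2 \<le> \<P>(\<omega> in M. (\<Sum>n. ennreal (X n \<omega>)) \<le> ennreal b)"
proof -
  have X_meas [measurable]: "X n \<in> borel_measurable M" for n
    using distributed_measurable[OF exp] by simp
  have "(\<integral>\<^sup>+\<omega>. (\<Sum>n. ennreal (X n \<omega>)) \<partial>M) = (\<Sum>n. \<integral>\<^sup>+\<omega>. ennreal (X n \<omega>) \<partial>M)"
    by (intro nn_integral_suminf) simp
  also have "\<dots> = (\<Sum>n. ennreal (1 / l n))"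
    by (intro suminf_cong nn_integral_exponential_distributed l_pos exp)
  finally have "(\<integral>\<^sup>+\<omega>. (\<Sum>n. ennreal (X n \<omega>)) \<partial>M) \<le> ennreal (1 / 2 * b)"
    using mean by simp
  then show ?thesis
    using prob_le_ge_by_Markov[of "\<lambda>\<omega>. \<Sum>n. ennreal (X n \<omega>)" b "1 / 2"] \<open>0 < b\<close> by simp
qed

lemma borel_measurable_explosion_time:
  assumes "\<And>k. x0 \<le> k \<Longrightarrow> tau k \<in> borel_measurable M"
  shows "explosion_time tau x0 \<in> borel_measurable M"
proof -
  have "(\<lambda>\<omega>. tau (x0 + n) \<omega>) \<in> borel_measurable M" for n
    using assms by simp
  then show ?thesis
    unfolding explosion_time_def[abs_def] by measurable
qed

lemma explosion_time_le:
  assumes "x0 \<le> m" and "0 \<le> \<delta>" and "real (m - x0) * \<delta> \<le> a" and "0 \<le> b"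
    and head: "\<And>k. x0 \<le> k \<Longrightarrow> k < m \<Longrightarrow> tau k \<omega> \<le> \<delta>"
    and tail: "(\<Sum>n. ennreal (tau (n + m) \<omega>)) \<le> ennreal b"
  shows "explosion_time tau x0 \<omega> \<le> ennreal (a + b)"
proof -
  define d where "d = m - x0"
  have "(\<Sum>n<d. ennreal (tau (x0 + n) \<omega>)) \<le> (\<Sum>n<d. ennreal \<delta>)"
    using head by (intro sum_mono ennreal_leI) (simp add: d_def)
  also have "\<dots> = ennreal (real d * \<delta>)"
    using \<open>0 \<le> \<delta>\<close> by (simp add: ennreal_mult ennreal_of_nat_eq_real_of_nat)
  also have "\<dots> \<le> ennreal a"
    using assms(3) by (simp add: d_def ennreal_leI)
  finally have head_sum: "(\<Sum>n<d. ennreal (tau (x0 + n) \<omega>)) \<le> ennreal a" .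
  have "explosion_time tau x0 \<omega> = (\<Sum>n. ennreal (tau (x0 + (n + d)) \<omega>)) + (\<Sum>n<d. ennreal (tau (x0 + n) \<omega>))"
    unfolding explosion_time_def by (rule suminf_offset) simp
  also have "\<dots> \<le> ennreal b + ennreal a"
    using tail head_sum \<open>x0 \<le> m\<close> by (intro add_mono) (simp_all add: d_def add_ac)
  also have "\<dots> = ennreal (a + b)"
  proof -
    have "0 \<le> a"
      using assms(2,3) by (meson mult_nonneg_nonneg of_nat_0_le_iff order_trans)
    then show ?thesis
      using \<open>0 \<le> b\<close> by (metis add.commute ennreal_plus)
  qed
  finally show ?thesis .
qed

lemma (in prob_space) indep_vars_explosion_time:
  assumes "indep_vars (\<lambda>_. borel) (\<lambda>(i, k). tau i k) {(i, k). i \<in> I \<and> x0 i \<le> k}"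
  shows "indep_vars (\<lambda>_. borel) (\<lambda>i. explosion_time (tau i) (x0 i)) I"
proof -
  define K where "K i = {(i', k). i' = i \<and> x0 i \<le> k}" for i
  have "indep_vars (\<lambda>i. PiM (K i) (\<lambda>_. borel))
      (\<lambda>i \<omega>. restrict (\<lambda>p. case p of (i, k) \<Rightarrow> tau i k \<omega>) (K i)) I"
    using indep_vars_restrict[OF assms, of I K] by (auto simp: K_def disjoint_family_on_def case_prod_unfold)
  moreover have "(\<lambda>h. \<Sum>n. ennreal (h (i, x0 i + n))) \<in> borel_measurable (PiM (K i) (\<lambda>_. borel))" for i
  proof -
    have "(\<lambda>h. h (i, x0 i + n)) \<in> borel_measurable (PiM (K i) (\<lambda>_. borel))" for n
      by (rule measurable_component_singleton) (simp add: K_def)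
    then show ?thesis by measurable
  qed
  ultimately have "indep_vars (\<lambda>_. borel)
      (\<lambda>i \<omega>. \<Sum>n. ennreal (restrict (\<lambda>p. case p of (i, k) \<Rightarrow> tau i k \<omega>) (K i) (i, x0 i + n))) I"
    by (rule indep_vars_compose2[where Y="\<lambda>i h. \<Sum>n. ennreal (h (i, x0 i + n))"])
  moreover have "(\<lambda>i \<omega>. \<Sum>n. ennreal (restrict (\<lambda>p. case p of (i, k) \<Rightarrow> tau i k \<omega>) (K i) (i, x0 i + n))) =
      (\<lambda>i. explosion_time (tau i) (x0 i))"
    by (simp add: fun_eq_iff K_def explosion_time_def)
  ultimately show ?thesis
    by simp
qed

lemma (in prob_space) prob_explosion_time_le_lower_bound:
  fixes tau :: "nat \<Rightarrow> 'a \<Rightarrow> real" and F :: "nat \<Rightarrow> real"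
  assumes indep: "indep_vars (\<lambda>_. borel) tau {x0..}"
    and exp: "\<And>k. x0 \<le> k \<Longrightarrow> distributed M lborel (tau k) (exponential_density (F k))"
    and F_pos: "\<And>k. x0 \<le> k \<Longrightarrow> 0 < F k"
    and "x0 \<le> m" and "0 \<le> \<delta>" and "real (m - x0) * \<delta> \<le> a" and "0 < b"
    and tail_mean: "(\<Sum>n. ennreal (1 / F (n + m))) \<le> ennreal (b / 2)"
  shows "(\<Prod>k\<in>{x0..<m}. 1 - exp (- \<delta> * F k)) / 2 \<le> \<P>(\<omega> in M. explosion_time tau x0 \<omega> \<le> ennreal (a + b))"
proof -
  have tau_meas [measurable]: "tau k \<in> borel_measurable M" if "x0 \<le> k" for k
    using distributed_measurable[OF exp[OF that]] by simp
  define head where "head \<omega> \<longleftrightarrow> (\<forall>k\<in>{x0..<m}. tau k \<omega> \<le> \<delta>)" for \<omega>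
  define tail where "tail \<omega> = (\<Sum>n. ennreal (tau (n + m) \<omega>))" for \<omega>
  have "\<P>(\<omega> in M. tau k \<omega> \<le> \<delta>) = 1 - exp (- \<delta> * F k)" if "x0 \<le> k" for k
    using exponential_distributedD_le[OF exp[OF that] \<open>0 \<le> \<delta>\<close> F_pos[OF that]] .
  moreover have head_sub: "{x0..<m} \<subseteq> {x0..}"
    by auto
  ultimately have head_prob: "\<P>(\<omega> in M. head \<omega>) = (\<Prod>k\<in>{x0..<m}. 1 - exp (- \<delta> * F k))"
    using prob_indep_vars_all[OF indep, of "{x0..<m}" "\<lambda>_. {..\<delta>}"] by (simp add: head_def)
  have tail_prob: "1 / 2 \<le> \<P>(\<omega> in M. tail \<omega> \<le> ennreal b)"
    unfolding tail_def using \<open>x0 \<le> m\<close> tail_mean \<open>0 < b\<close>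
    by (intro prob_suminf_exponential_le_ge_half[of "\<lambda>n. tau (n + m)" "\<lambda>n. F (n + m)"] exp F_pos) auto
  have head_tail_indep: "\<P>(\<omega> in M. head \<omega> \<and> tail \<omega> \<le> ennreal b) =
      \<P>(\<omega> in M. head \<omega>) * \<P>(\<omega> in M. tail \<omega> \<le> ennreal b)"
  proof -
    have "(\<lambda>h. h (n + m)) \<in> borel_measurable (PiM {m..} (\<lambda>_. borel))" for n
      by (rule measurable_component_singleton) simp
    then have pred_tail: "Measurable.pred (PiM {m..} (\<lambda>_. borel)) (\<lambda>h. (\<Sum>n. ennreal (h (n + m))) \<le> ennreal b)"
      by measurable
    have pred_head: "Measurable.pred (PiM {x0..<m} (\<lambda>_. borel)) (\<lambda>h. \<forall>k\<in>{x0..<m}. h k \<le> \<delta>)"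
      by measurable
    have "{x0..<m} \<inter> {m..} = {}" and tail_sub: "{m..} \<subseteq> {x0..}"
      using \<open>x0 \<le> m\<close> by auto
    from prob_indep_vars_restrict_conj[OF indep this(1) head_sub tail_sub pred_head pred_tail]
    show ?thesis
      by (simp add: head_def tail_def)
  qed
  have "(\<Prod>k\<in>{x0..<m}. 1 - exp (- \<delta> * F k)) / 2 = \<P>(\<omega> in M. head \<omega>) * (1 / 2)"
    by (simp add: head_prob)
  also have "\<dots> \<le> \<P>(\<omega> in M. head \<omega>) * \<P>(\<omega> in M. tail \<omega> \<le> ennreal b)"
    using tail_prob by (intro mult_left_mono) simp_all
  also have "\<dots> = \<P>(\<omega> in M. head \<omega> \<and> tail \<omega> \<le> ennreal b)"
    by (rule head_tail_indep[symmetric])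
  also have "\<dots> \<le> \<P>(\<omega> in M. explosion_time tau x0 \<omega> \<le> ennreal (a + b))"
  proof (intro finite_measure_mono)
    have "explosion_time tau x0 \<in> borel_measurable M"
      by (rule borel_measurable_explosion_time) simp
    then show "{\<omega> \<in> space M. explosion_time tau x0 \<omega> \<le> ennreal (a + b)} \<in> events"
      by measurable
  qed (use assms(4-7) explosion_time_le[of x0 m \<delta> a b tau] in \<open>auto simp: head_def tail_def\<close>)
  finally show ?thesis .
qed

lemma (in prob_space) prob_Min_le_ge_one_minus_power:
  fixes T :: "nat \<Rightarrow> 'a \<Rightarrow> 'b::{second_countable_topology, linorder_topology}"
  assumes indep: "indep_vars (\<lambda>_. borel) T B" and "B \<subseteq> {1..}"
    and T_meas: "\<And>i. 1 \<le> i \<Longrightarrow> T i \<in> borel_measurable M"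
    and p_le: "\<And>i. i \<in> B \<Longrightarrow> p \<le> \<P>(\<omega> in M. T i \<omega> \<le> c)"
  shows "1 - (1 - p) ^ card (B \<inter> {..A}) \<le> \<P>(\<omega> in M. (MIN i\<in>{1..A}. T i \<omega>) \<le> c)"
proof -
  define J where "J = B \<inter> {..A}"
  have J: "finite J" "J \<subseteq> B" "J \<subseteq> {1..A}"
    using assms(2) by (auto simp: J_def)
  have Min_meas: "(\<lambda>\<omega>. MIN i\<in>{1..A}. T i \<omega>) \<in> borel_measurable M"
    using T_meas by (intro borel_measurable_Min) auto
  have "\<P>(\<omega> in M. \<not> (MIN i\<in>{1..A}. T i \<omega>) \<le> c) \<le> \<P>(\<omega> in M. \<forall>i\<in>J. T i \<omega> \<in> {c<..})"
  proof (intro finite_measure_mono)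
    show "{\<omega> \<in> space M. \<forall>i\<in>J. T i \<omega> \<in> {c<..}} \<in> events"
      using T_meas by measurable (use J in auto)
  qed (use J in \<open>auto simp: not_le intro: less_le_trans[OF _ Min_le]\<close>)
  also have "\<dots> = (\<Prod>i\<in>J. \<P>(\<omega> in M. T i \<omega> \<in> {c<..}))"
    using J by (intro prob_indep_vars_all[OF indep]) auto
  also have "\<dots> \<le> (\<Prod>i\<in>J. 1 - p)"
  proof (intro prod_mono conjI)
    fix i assume "i \<in> J"
    then have "{\<omega> \<in> space M. T i \<omega> \<le> c} \<in> events" and "p \<le> \<P>(\<omega> in M. T i \<omega> \<le> c)"
      using J T_meas p_le by auto
    then show "\<P>(\<omega> in M. T i \<omega> \<in> {c<..}) \<le> 1 - p"
      using prob_neg[of "\<lambda>\<omega>. T i \<omega> \<le> c"] by (simp add: not_le)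
  qed simp
  also have "\<dots> = (1 - p) ^ card J"
    by simp
  finally have "\<P>(\<omega> in M. \<not> (MIN i\<in>{1..A}. T i \<omega>) \<le> c) \<le> (1 - p) ^ card J" .
  moreover have "{\<omega> \<in> space M. (MIN i\<in>{1..A}. T i \<omega>) \<le> c} \<in> events"
    using Min_meas by measurable
  ultimately show ?thesis
    by (simp add: prob_neg J_def)
qed

lemma (in prob_space) prob_Min_le_tendsto_1:
  fixes T :: "nat \<Rightarrow> 'a \<Rightarrow> 'b::{second_countable_topology, linorder_topology}"
  assumes indep: "indep_vars (\<lambda>_. borel) T B" and "B \<subseteq> {1..}" and "infinite B"
    and T_meas: "\<And>i. 1 \<le> i \<Longrightarrow> T i \<in> borel_measurable M"
    and "0 < p" and p_le: "\<And>i. i \<in> B \<Longrightarrow> p \<le> \<P>(\<omega> in M. T i \<omega> \<le> c)"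
  shows "(\<lambda>A. \<P>(\<omega> in M. (MIN i\<in>{1..A}. T i \<omega>) \<le> c)) \<longlonglongrightarrow> 1"
proof -
  have bound: "1 - (1 - p) ^ card (B \<inter> {..A}) \<le> \<P>(\<omega> in M. (MIN i\<in>{1..A}. T i \<omega>) \<le> c)" for A
    using prob_Min_le_ge_one_minus_power[OF indep assms(2) T_meas p_le] .
  obtain i where "i \<in> B"
    using \<open>infinite B\<close> by (metis finite.emptyI ex_in_conv)
  then have "p \<le> 1"
    using p_le[of i] by (meson order_trans prob_le_1)
  then have power_lim: "(\<lambda>A. (1 - p) ^ card (B \<inter> {..A})) \<longlonglongrightarrow> 0"
    using \<open>0 < p\<close> \<open>infinite B\<close>
    by (intro filterlim_compose[OF LIMSEQ_power_zero filterlim_card_Int_atMost]) auto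
  have lower_lim: "(\<lambda>A. 1 - (1 - p) ^ card (B \<inter> {..A})) \<longlonglongrightarrow> 1"
    using tendsto_diff[OF tendsto_const power_lim, of 1] by simp
  have upper: "eventually (\<lambda>A. \<P>(\<omega> in M. (MIN i\<in>{1..A}. T i \<omega>) \<le> c) \<le> 1) sequentially"
    by (simp add: prob_le_1)
  show ?thesis
    by (rule tendsto_sandwich[OF always_eventually upper lower_lim tendsto_const]) (use bound in blast)
qed

lemma (in prob_space) prob_explosion_time_le_rate_lower_bound:
  fixes tau :: "nat \<Rightarrow> 'a \<Rightarrow> real" and F r :: "nat \<Rightarrow> real"
  assumes indep: "indep_vars (\<lambda>_. borel) tau {x0..}"
    and exp: "\<And>k. x0 \<le> k \<Longrightarrow> distributed M lborel (tau k) (exponential_density (F k))"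
    and F_pos: "\<And>k. x0 \<le> k \<Longrightarrow> 0 < F k" and "1 \<le> x0"
    and r_pos: "\<And>k. 1 \<le> k \<Longrightarrow> 0 < r k" and r_le: "\<And>k. x0 \<le> k \<Longrightarrow> k < K \<Longrightarrow> r k \<le> F k"
    and tail_mean: "\<And>m. K \<le> m \<Longrightarrow> (\<Sum>n. ennreal (1 / F (n + m))) \<le> ennreal (x / 4)"
    and "0 < x"
  shows "(\<Prod>k\<in>{1..<K}. 1 - exp (- (x / (2 * K)) * r k)) / 2 \<le> \<P>(\<omega> in M. explosion_time tau x0 \<omega> \<le> ennreal x)"
proof -
  define \<delta> where "\<delta> = x / (2 * K)"
  define m where "m = max K x0"
  have "0 \<le> \<delta>"
    using \<open>0 < x\<close> by (simp add: \<delta>_def)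
  then have factor_bounds: "0 \<le> 1 - exp (- \<delta> * r k) \<and> 1 - exp (- \<delta> * r k) \<le> 1" if "1 \<le> k" for k
    using r_pos[OF that] by simp
  have "(\<Prod>k\<in>{1..<K}. 1 - exp (- \<delta> * r k)) \<le> (\<Prod>k\<in>{x0..<m}. 1 - exp (- \<delta> * r k))"
    using \<open>1 \<le> x0\<close> factor_bounds by (intro prod_superset_le_prod) (auto simp: m_def)
  also have "\<dots> \<le> (\<Prod>k\<in>{x0..<m}. 1 - exp (- \<delta> * F k))"
    using \<open>1 \<le> x0\<close> \<open>0 \<le> \<delta>\<close> factor_bounds r_le by (intro prod_mono) (auto simp: m_def intro: mult_left_mono)
  finally have "(\<Prod>k\<in>{1..<K}. 1 - exp (- \<delta> * r k)) / 2 \<le> (\<Prod>k\<in>{x0..<m}. 1 - exp (- \<delta> * F k)) / 2"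
    by simp
  also have "\<dots> \<le> \<P>(\<omega> in M. explosion_time tau x0 \<omega> \<le> ennreal (x / 2 + x / 2))"
  proof (rule prob_explosion_time_le_lower_bound[OF indep exp F_pos])
    have "real (m - x0) * \<delta> \<le> real K * \<delta>"
      using \<open>0 \<le> \<delta>\<close> by (intro mult_right_mono) (auto simp: m_def)
    also have "\<dots> \<le> x / 2"
      using \<open>0 < x\<close> by (simp add: \<delta>_def)
    finally show "real (m - x0) * \<delta> \<le> x / 2" .
    show "(\<Sum>n. ennreal (1 / F (n + m))) \<le> ennreal (x / 2 / 2)"
      using tail_mean[of m] by (simp add: m_def)
  qed (use \<open>0 < x\<close> \<open>0 \<le> \<delta>\<close> in \<open>simp_all add: m_def\<close>)
  finally show ?thesis
    by (simp add: \<delta>_def)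
qed

lemma (in prob_space) prob_explosion_time_le_uniform_lower_bound:
  fixes F :: "'i \<Rightarrow> nat \<Rightarrow> real" and X0 :: "'i \<Rightarrow> nat" and tau :: "'i \<Rightarrow> nat \<Rightarrow> 'a \<Rightarrow> real"
  assumes F_pos: "\<And>i k. i \<in> B \<Longrightarrow> 1 \<le> k \<Longrightarrow> 0 < F i k"
    and X0_pos: "\<And>i. i \<in> B \<Longrightarrow> 1 \<le> X0 i"
    and tau_exp: "\<And>i k. i \<in> B \<Longrightarrow> X0 i \<le> k \<Longrightarrow> distributed M lborel (tau i k) (exponential_density (F i k))"
    and tau_indep: "\<And>i. i \<in> B \<Longrightarrow> indep_vars (\<lambda>_. borel) (tau i) {X0 i..}"
    and "B \<noteq> {}" and B_sum: "(\<Sum>k. SUP i\<in>B. ennreal (1 / F i (Suc k))) < \<infinity>"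
    and "0 < x"
  obtains p where "0 < p" and "\<And>i. i \<in> B \<Longrightarrow> p \<le> \<P>(\<omega> in M. explosion_time (tau i) (X0 i) \<omega> \<le> ennreal x)"
proof -
  obtain r where r_pos: "\<And>k. 1 \<le> k \<Longrightarrow> 0 < r k"
    and r_le: "\<And>i k. i \<in> B \<Longrightarrow> 1 \<le> k \<Longrightarrow> r k \<le> F i k"
    using summable_SUP_inverse_lower_bound[OF \<open>B \<noteq> {}\<close> F_pos B_sum] by blast
  have "0 < ennreal (x / 4)"
    using \<open>0 < x\<close> by simp
  then obtain K where tail: "\<And>i m. i \<in> B \<Longrightarrow> K \<le> m \<Longrightarrow> (\<Sum>n. ennreal (1 / F i (Suc (n + m)))) < ennreal (x / 4)"
    using suminf_SUP_tails_uniformly_less[where g="\<lambda>i k. ennreal (1 / F i (Suc k))", OF B_sum] by blast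
  have tail_mean: "(\<Sum>n. ennreal (1 / F i (n + m))) \<le> ennreal (x / 4)" if "i \<in> B" and "Suc K \<le> m" for i m
  proof -
    have "Suc (n + (m - 1)) = n + m" for n
      using that by simp
    moreover have "K \<le> m - 1"
      using that(2) by arith
    ultimately show ?thesis
      using tail[OF that(1), of "m - 1"] by simp
  qed
  define q where "q = (\<Prod>k\<in>{1..<Suc K}. 1 - exp (- (x / (2 * Suc K)) * r k))"
  have "0 < q"
    unfolding q_def using r_pos \<open>0 < x\<close> by (intro prod_pos) auto
  moreover have "q / 2 \<le> \<P>(\<omega> in M. explosion_time (tau i) (X0 i) \<omega> \<le> ennreal x)" if "i \<in> B" for i
    unfolding q_def
  proof (rule prob_explosion_time_le_rate_lower_bound[OF tau_indep tau_exp _ X0_pos r_pos _ tail_mean \<open>0 < x\<close>])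
    show "0 < F i k" if "X0 i \<le> k" for k
      using F_pos X0_pos \<open>i \<in> B\<close> that by (meson order_trans)
    show "r k \<le> F i k" if "X0 i \<le> k" for k
      using r_le X0_pos \<open>i \<in> B\<close> that by (meson order_trans)
  qed (use that in auto)
  ultimately show ?thesis
    using that[of "q / 2"] by simp
qed

theorem lemma6:
  fixes M :: "'a measure"
    and F :: "nat \<Rightarrow> nat \<Rightarrow> real"
    and X0 :: "nat \<Rightarrow> nat"
    and tau :: "nat \<Rightarrow> nat \<Rightarrow> 'a \<Rightarrow> real"
    and B :: "nat set"
  assumes "prob_space M"
    and F_pos: "\<And>i k. 1 \<le> i \<Longrightarrow> 1 \<le> k \<Longrightarrow> 0 < F i k"
    and X0_pos: "\<And>i. 1 \<le> i \<Longrightarrow> 1 \<le> X0 i"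
    and tau_exp: "\<And>i k. 1 \<le> i \<Longrightarrow> X0 i \<le> k \<Longrightarrow>
        distributed M lborel (tau i k) (exponential_density (F i k))"
    and tau_indep: "prob_space.indep_vars M (\<lambda>_. borel) (\<lambda>(i, k). tau i k)
        {(i, k). 1 \<le> i \<and> X0 i \<le> k}"
    and B_sub: "B \<subseteq> {1..}"
    and B_inf: "infinite B"
    and B_sum: "(\<Sum>k. (SUP i\<in>B. ennreal (1 / F i (Suc k)))) < \<infinity>"
  shows "\<forall>x::real. 0 < x \<longrightarrow>
     (\<lambda>A. measure M {\<omega> \<in> space M.
        (MIN i\<in>{1..A}. explosion_time (tau i) (X0 i) \<omega>) \<le> ennreal x}) \<longlonglongrightarrow> 1"
proof (intro allI impI)
  fix x :: real
  assume "0 < x"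
  interpret prob_space M by fact
  have indep_B: "indep_vars (\<lambda>_. borel) (\<lambda>(i, k). tau i k) {(i, k). i \<in> B \<and> X0 i \<le> k}"
    using B_sub by (intro indep_vars_subset[OF tau_indep]) auto
  have "indep_vars (\<lambda>_. borel) (tau i) {X0 i..}" if "i \<in> B" for i
    using indep_vars_reindex[OF indep_B, of "Pair i" "{X0 i..}"] that by (simp add: inj_on_def image_subset_iff)
  moreover have "B \<noteq> {}"
    using B_inf by auto
  moreover have "\<And>i k. i \<in> B \<Longrightarrow> 1 \<le> k \<Longrightarrow> 0 < F i k" and "\<And>i. i \<in> B \<Longrightarrow> 1 \<le> X0 i"
    and "\<And>i k. i \<in> B \<Longrightarrow> X0 i \<le> k \<Longrightarrow> distributed M lborel (tau i k) (exponential_density (F i k))"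
    using B_sub F_pos X0_pos tau_exp by auto
  ultimately obtain p where "0 < p"
    and p: "\<And>i. i \<in> B \<Longrightarrow> p \<le> \<P>(\<omega> in M. explosion_time (tau i) (X0 i) \<omega> \<le> ennreal x)"
    using prob_explosion_time_le_uniform_lower_bound[OF _ _ _ _ _ B_sum \<open>0 < x\<close>] by blast
  have "explosion_time (tau i) (X0 i) \<in> borel_measurable M" if "1 \<le> i" for i
    using distributed_measurable[OF tau_exp[OF that]] by (intro borel_measurable_explosion_time) simp
  then show "(\<lambda>A. \<P>(\<omega> in M. (MIN i\<in>{1..A}. explosion_time (tau i) (X0 i) \<omega>) \<le> ennreal x)) \<longlonglongrightarrow> 1"
    by (rule prob_Min_le_tendsto_1[OF indep_vars_explosion_time[OF indep_B] B_sub B_inf _ \<open>0 < p\<close> p])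
qed

end
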